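(* Let $\mathcal{G}=(\mathcal{N},\mathcal{P})$ be a connected directed graph with nodes $\mathcal{N}=\{1,\dots,N\}$ and edges (pipes) $\mathcal{P}=\{1,\dots,P\}$, each edge written $\ell=(m,n)$ with $m,n\in\mathcal{N}$, and let $\mathbf{A}\in\mathbb{R}^{P\times N}$ be its edge-node incidence matrix ($A_{\ell,m}=+1$, $A_{\ell,n}=-1$ for $\ell=(m,n)$, all other entries of row $\ell$ zero). The edge set is partitioned as $\mathcal{P}=\mathcal{P}_a\cup\bar{\mathcal{P}}_a$ into compressor edges $\mathcal{P}_a$ and lossy pipes $\bar{\mathcal{P}}_a=\mathcal{P}\setminus\mathcal{P}_a$. Assume every cycle of $\mathcal{G}$ contains at least one lossy pipe. Fix a reference node $r\in\mathcal{N}$ with given value $\psi_r$, a vector $\mathbf{q}\in\mathbb{R}^N$ with $\mathbf{1}^\top\mathbf{q}=0$, friction parameters $a_\ell>0$ for $\ell\in\bar{\mathcal{P}}_a$, and compression ratios $\alpha_\ell>0$ for $\ell\in\mathcal{P}_a$. Consider the gas flow problem: find $\boldsymbol{\phi}\in\mathbb{R}^P$ and $\boldsymbol{\psi}\in\mathbb{R}^N$ (with the $r$-th entry equal to the given $\psi_r$) such that (i) $\mathbf{A}^\top\boldsymbol{\phi}=\mathbf{q}$; (ii) $\psi_m-\psi_n=a_\ell\,\mathrm{sign}(\phi_\ell)\,\phi_\ell^2$ for all $\ell=(m,n)\in\bar{\mathcal{P}}_a$, and $\psi_n\ge 0$ for all $n\in\mathcal{N}$; (iii) $\psi_n=\alpha_\ell\psi_m$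 and $\phi_\ell\ge 0$ for all $\ell=(m,n)\in\mathcal{P}_a$. Then, if this problem has a solution $(\boldsymbol{\phi},\boldsymbol{\psi})$, the solution is unique.
   Context: $\mathrm{sign}(x)$ equals $+1$ if $x>0$, $-1$ if $x<0$, and $0$ if $x=0$. A cycle is a closed path in the underlying undirected graph starting and ending at the same node without repeating edges or nodes. The variables $\psi_n$ represent squared gas pressures at nodes, $\phi_\ell$ gas flows on edges, and $q_n$ nodal gas injections. *)

theory Defs
  imports "HOL-Analysis.Analysis"
begin

text \<open>A directed (multi)graph with node type 'n and edge type 'e (both finite);
  edge e goes from src e to tgt e.\<close>

definition incidence :: "('e \<Rightarrow> 'n) \<Rightarrow> ('e \<Rightarrow> 'n) \<Rightarrow> real ^ 'n ^ 'e" where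
  "incidence src tgt = (\<chi> l m. (if src l = m then 1 else 0) - (if tgt l = m then 1 else 0))"

definition connects :: "('e \<Rightarrow> 'n) \<Rightarrow> ('e \<Rightarrow> 'n) \<Rightarrow> 'e \<Rightarrow> 'n \<Rightarrow> 'n \<Rightarrow> bool" where
  "connects src tgt e u v \<longleftrightarrow> (src e = u \<and> tgt e = v) \<or> (src e = v \<and> tgt e = u)"

definition graph_connected :: "('e \<Rightarrow> 'n) \<Rightarrow> ('e \<Rightarrow> 'n) \<Rightarrow> bool" where
  "graph_connected src tgt \<longleftrightarrow> (\<forall>u v. (\<lambda>x y. \<exists>e. connects src tgt e x y)\<^sup>*\<^sup>* u v)"

text \<open>A cycle of the underlying undirected graph: distinct edges es ! i joining
  distinct nodes vs ! i and vs ! ((i+1) mod k), k = length es \<ge> 1.\<close>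
definition is_cycle :: "('e \<Rightarrow> 'n) \<Rightarrow> ('e \<Rightarrow> 'n) \<Rightarrow> 'e list \<Rightarrow> 'n list \<Rightarrow> bool" where
  "is_cycle src tgt es vs \<longleftrightarrow> length es \<ge> 1 \<and> length vs = length es \<and> distinct es \<and> distinct vs \<and>
     (\<forall>i < length es. connects src tgt (es ! i) (vs ! i) (vs ! ((i + 1) mod length es)))"

definition gas_flow_solution ::
  "('e \<Rightarrow> 'n) \<Rightarrow> ('e \<Rightarrow> 'n) \<Rightarrow> 'e set \<Rightarrow> 'n \<Rightarrow> real \<Rightarrow> real ^ 'n \<Rightarrow> ('e \<Rightarrow> real) \<Rightarrow> ('e \<Rightarrow> real)
    \<Rightarrow> real ^ 'e \<Rightarrow> real ^ 'n \<Rightarrow> bool" where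
  "gas_flow_solution src tgt Pa r psi_r q a alpha \<phi> \<psi> \<longleftrightarrow>
     \<psi> $ r = psi_r \<and>
     transpose (incidence src tgt) *v \<phi> = q \<and>
     (\<forall>l. l \<notin> Pa \<longrightarrow> \<psi> $ src l - \<psi> $ tgt l = a l * sgn (\<phi> $ l) * (\<phi> $ l)\<^sup>2) \<and>
     (\<forall>n. \<psi> $ n \<ge> 0) \<and>
     (\<forall>l\<in>Pa. \<psi> $ tgt l = alpha l * \<psi> $ src l \<and> \<phi> $ l \<ge> 0)"

end

theory Submission
  imports Defs
begin

(* Let S be the set of nodes where psi2 < psi1; it misses r, so if it is
   nonempty, connectivity yields an edge crossing the cut. A compressor edge never crosses it,
   since psi_n = alpha psi_m with alpha > 0 preserves the comparison, and on a lossy pipe the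
   flow is a strictly increasing function of the pressure drop a sgn(x) x^2. Hence every edge
   carries a nonnegative net flow of phi1 - phi2 out of S and a crossing edge a positive one,
   whereas that net outflow is the sum over S of A^T (phi1 - phi2) = q - q = 0.
   Flows next: with equal pressures the lossy flows agree, so phi1 - phi2 is a circulation
   supported on compressor edges, which contain no cycle. At the end of a longest path in the
   support, conservation forces a second support edge, which either closes a cycle or extends
   the path. *)

lemma strict_mono_sgn_mult_square:
  fixes a :: real
  assumes "0 < a"
  shows "strict_mono (\<lambda>x. a * sgn x * x\<^sup>2)"
proof (rule strict_monoI)
  fix x y :: real
  assume "x < y"
  have "sgn z * z\<^sup>2 = z * \<bar>z\<bar>" for z :: real
    by (simp add: sgn_if power2_eq_square)
  moreover have "x * \<bar>x\<bar> < y * \<bar>y\<bar>"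
  proof -
    consider "0 \<le> x" | "x < 0" "0 \<le> y" | "y < 0" by linarith
    then show ?thesis
    proof cases
      case 1
      then show ?thesis using \<open>x < y\<close> by (simp add: mult_strict_mono)
    next
      case 2
      then have "x * \<bar>x\<bar> < 0" "0 \<le> y * \<bar>y\<bar>" by (simp_all add: mult_neg_neg)
      then show ?thesis by linarith
    next
      case 3
      then show ?thesis using \<open>x < y\<close> mult_strict_mono[of "-y" "-x" "-y" "-x"] by simp
    qed
  qed
  ultimately show "a * sgn x * x\<^sup>2 < a * sgn y * y\<^sup>2"
    using assms by (simp add: mult.assoc)
qed

lemma transpose_incidence_mult_nth:
  "(transpose (incidence src tgt) *v \<phi>) $ n =
    (\<Sum>l\<in>UNIV. (of_bool (src l = n) - of_bool (tgt l = n)) * \<phi> $ l)"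
  by (simp add: matrix_vector_mult_def transpose_def incidence_def of_bool_def)

lemma sum_transpose_incidence_mult:
  fixes src tgt :: "'e::finite \<Rightarrow> 'n::finite"
  shows "(\<Sum>n\<in>S. (transpose (incidence src tgt) *v \<phi>) $ n) =
    (\<Sum>l\<in>UNIV. (of_bool (src l \<in> S) - of_bool (tgt l \<in> S)) * \<phi> $ l)"
proof -
  have "(\<Sum>n\<in>S. (transpose (incidence src tgt) *v \<phi>) $ n) =
      (\<Sum>l\<in>UNIV. (\<Sum>n\<in>S. of_bool (src l = n) - of_bool (tgt l = n)) * \<phi> $ l)"
    by (simp only: transpose_incidence_mult_nth sum_distrib_right sum.swap[of _ S])
  also have "\<dots> = (\<Sum>l\<in>UNIV. (of_bool (src l \<in> S) - of_bool (tgt l \<in> S)) * \<phi> $ l)"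
    by (simp add: sum_subtractf of_bool_def)
  finally show ?thesis .
qed

lemma rtranclp_crossing_step:
  assumes "R\<^sup>*\<^sup>* u v" "\<not> P u" "P v"
  shows "\<exists>x y. R x y \<and> \<not> P x \<and> P y"
  using assms by (induction rule: rtranclp_induct) auto

lemma graph_connected_cut_edge:
  assumes "graph_connected src tgt" "u \<notin> S" "v \<in> S"
  shows "\<exists>e. (src e \<in> S) \<noteq> (tgt e \<in> S)"
proof -
  have "(\<lambda>x y. \<exists>e. connects src tgt e x y)\<^sup>*\<^sup>* u v"
    using assms(1) by (simp add: graph_connected_def)
  then obtain x y e where "connects src tgt e x y" "x \<notin> S" "y \<in> S"
    using rtranclp_crossing_step[where P = "\<lambda>z. z \<in> S"] assms(2,3) by blast
  then show ?thesis by (auto simp: connects_def)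
qed

definition is_path :: "('e \<Rightarrow> 'n) \<Rightarrow> ('e \<Rightarrow> 'n) \<Rightarrow> 'e list \<Rightarrow> 'n list \<Rightarrow> bool" where
  "is_path src tgt es vs \<longleftrightarrow> length vs = Suc (length es) \<and> distinct es \<and> distinct vs \<and>
     (\<forall>i < length es. connects src tgt (es ! i) (vs ! i) (vs ! Suc i))"

lemma is_path_last:
  assumes "is_path src tgt es vs"
  shows "last vs = vs ! length es"
proof -
  have "length vs = Suc (length es)" using assms by (simp add: is_path_def)
  then show ?thesis by (cases vs rule: rev_cases) (auto simp: nth_append)
qed

lemma is_path_snoc:
  assumes "is_path src tgt es vs" "connects src tgt e (last vs) w" "e \<notin> set es" "w \<notin> set vs"
  shows "is_path src tgt (es @ [e]) (vs @ [w])"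
  using assms is_path_last[OF assms(1)] by (auto simp: is_path_def nth_append less_Suc_eq)

lemma is_path_close_cycle:
  assumes path: "is_path src tgt es vs"
    and closing: "connects src tgt e (last vs) (vs ! i)" "e \<notin> set es" "i < length vs"
  shows "is_cycle src tgt (drop i es @ [e]) (drop i vs)"
  unfolding is_cycle_def
proof (intro conjI allI impI)
  let ?k = "length es"
  have lvs: "length vs = Suc ?k" and des: "distinct es" and dvs: "distinct vs"
    and con: "\<And>j. j < ?k \<Longrightarrow> connects src tgt (es ! j) (vs ! j) (vs ! Suc j)"
    using path by (auto simp: is_path_def)
  have ik: "i \<le> ?k" using closing(3) lvs by simp
  show "distinct (drop i es @ [e])" using des closing(2) by (auto dest: in_set_dropD)
  show "distinct (drop i vs)" using dvs by simp
  show "length (drop i vs) = length (drop i es @ [e])" using lvs ik by simp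
  show "1 \<le> length (drop i es @ [e])" by simp
  fix j assume j: "j < length (drop i es @ [e])"
  show "connects src tgt ((drop i es @ [e]) ! j) (drop i vs ! j)
      (drop i vs ! ((j + 1) mod length (drop i es @ [e])))"
  proof (cases "j < ?k - i")
    case True
    then show ?thesis using con[of "i + j"] ik lvs by (simp add: nth_append)
  next
    case False
    then have "j = ?k - i" using j ik by simp
    then show ?thesis using closing(1) is_path_last[OF path] ik lvs by (simp add: nth_append)
  qed
qed

lemma is_path_edge_at_last:
  assumes path: "is_path src tgt es vs" and j: "j < length es"
    and touches: "src (es ! j) = last vs \<or> tgt (es ! j) = last vs"
  shows "j = length es - 1"
proof -
  have "connects src tgt (es ! j) (vs ! j) (vs ! Suc j)"
    using path j by (simp add: is_path_def)
  then have "last vs = vs ! j \<or> last vs = vs ! Suc j"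
    using touches by (auto simp: connects_def)
  then have "length es = j \<or> length es = Suc j"
    using path j by (auto simp: is_path_last is_path_def nth_eq_iff_index_eq)
  then show ?thesis using j by linarith
qed

lemma circulation_path_end_edge:
  fixes src tgt :: "'e::finite \<Rightarrow> 'n::finite" and d :: "real ^ 'e"
  assumes circ: "transpose (incidence src tgt) *v d = 0"
    and path: "is_path src tgt es vs" "es \<noteq> []" and supp: "\<forall>l\<in>set es. d $ l \<noteq> 0"
  shows "\<exists>e w. d $ e \<noteq> 0 \<and> connects src tgt e (last vs) w \<and> e \<notin> set es"
proof (rule ccontr)
  assume none: "\<not> ?thesis"
  let ?x = "last vs" and ?k = "length es"
  define e where "e = es ! (?k - 1)"
  define f where "f l = (of_bool (src l = ?x) - of_bool (tgt l = ?x)) * d $ l" for l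
  have k: "?k - 1 < ?k" "Suc (?k - 1) = ?k" using path(2) by auto
  have "connects src tgt e (vs ! (?k - 1)) (vs ! Suc (?k - 1))"
    using path(1) k(1) by (simp add: is_path_def e_def)
  then have "connects src tgt e (vs ! (?k - 1)) ?x"
    using k(2) is_path_last[OF path(1)] by simp
  moreover have "vs ! (?k - 1) \<noteq> ?x"
    using path(1) k by (auto simp: is_path_def is_path_last nth_eq_iff_index_eq)
  moreover have "d $ e \<noteq> 0" using supp k by (simp add: e_def)
  ultimately have "f e \<noteq> 0" by (auto simp: f_def connects_def)
  have "f l = 0" if "l \<noteq> e" for l
  proof (rule ccontr)
    assume "f l \<noteq> 0"
    then have "d $ l \<noteq> 0" "src l = ?x \<or> tgt l = ?x" by (auto simp: f_def)
    then have "l \<in> set es" using none by (auto simp: connects_def)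
    then obtain j where "j < ?k" "l = es ! j" by (auto simp: in_set_conv_nth)
    then show False
      using is_path_edge_at_last[OF path(1)] \<open>src l = ?x \<or> tgt l = ?x\<close> that by (auto simp: e_def)
  qed
  then have "(\<Sum>l\<in>UNIV. f l) = f e"
    using sum.mono_neutral_left[of UNIV "{e}" f] by simp
  then have "(transpose (incidence src tgt) *v d) $ ?x \<noteq> 0"
    using \<open>f e \<noteq> 0\<close> by (simp only: transpose_incidence_mult_nth f_def not_False_eq_True)
  then show False using circ by simp
qed

lemma circulation_acyclic_support_eq_0:
  fixes src tgt :: "'e::finite \<Rightarrow> 'n::finite" and d :: "real ^ 'e"
  assumes circ: "transpose (incidence src tgt) *v d = 0"
    and acyclic: "\<forall>es vs. is_cycle src tgt es vs \<longrightarrow> (\<exists>l\<in>set es. d $ l = 0)"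
  shows "d = 0"
proof (rule ccontr)
  assume "d \<noteq> 0"
  then obtain l0 where l0: "d $ l0 \<noteq> 0" by (auto simp: vec_eq_iff)
  define supported_path where "supported_path p \<longleftrightarrow>
      is_path src tgt (fst p) (snd p) \<and> (\<forall>l\<in>set (fst p). d $ l \<noteq> 0) \<and> hd (snd p) = src l0" for p
  have "supported_path ([], [src l0])" by (simp add: supported_path_def is_path_def)
  moreover have "length (snd p) < Suc CARD('n)" if "supported_path p" for p
  proof -
    have "length (snd p) = card (set (snd p))"
      using that by (simp add: supported_path_def is_path_def distinct_card)
    also have "\<dots> \<le> CARD('n)" by (rule card_mono) auto
    finally show ?thesis by simp
  qed
  ultimately obtain es vs where longest: "supported_path (es, vs)"
    "\<And>p. supported_path p \<Longrightarrow> length (snd p) \<le> length vs"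
    using Lattices_Big.ex_has_greatest_nat[of supported_path _ "\<lambda>p. length (snd p)"]
    by (metis prod.collapse snd_conv)
  then have path: "is_path src tgt es vs" and supp: "\<forall>l\<in>set es. d $ l \<noteq> 0"
    and start: "hd vs = src l0"
    by (simp_all add: supported_path_def)
  obtain e w where e: "d $ e \<noteq> 0" "connects src tgt e (last vs) w" "e \<notin> set es"
  proof (cases "es = []")
    case True
    then have "vs = [src l0]" using path start by (cases vs) (auto simp: is_path_def)
    then show ?thesis using that[of l0 "tgt l0"] l0 True by (simp add: connects_def)
  next
    case False
    then show ?thesis using that circulation_path_end_edge[OF circ path False supp] by blast
  qed
  show False
  proof (cases "w \<in> set vs")
    case True
    then obtain i where i: "i < length vs" "w = vs ! i" by (auto simp: in_set_conv_nth)
    then have "is_cycle src tgt (drop i es @ [e]) (drop i vs)"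
      using is_path_close_cycle[OF path] e by simp
    then show False
      using acyclic supp e(1) by (fastforce dest: in_set_dropD)
  next
    case False
    then have "supported_path (es @ [e], vs @ [w])"
      using path supp start e is_path_snoc[OF path]
      by (auto simp: supported_path_def is_path_def hd_append)
    then show False using longest(2) by fastforce
  qed
qed

lemma gas_flow_solutionD:
  assumes "gas_flow_solution src tgt Pa r psi_r q a alpha \<phi> \<psi>"
  shows "\<psi> $ r = psi_r"
    and "transpose (incidence src tgt) *v \<phi> = q"
    and "l \<notin> Pa \<Longrightarrow> \<psi> $ src l - \<psi> $ tgt l = a l * sgn (\<phi> $ l) * (\<phi> $ l)\<^sup>2"
    and "l \<in> Pa \<Longrightarrow> \<psi> $ tgt l = alpha l * \<psi> $ src l"
  using assms by (auto simp: gas_flow_solution_def)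

lemma gas_flow_solutions_diff_circulation:
  assumes "gas_flow_solution src tgt Pa r psi_r q a alpha \<phi>1 \<psi>1"
    and "gas_flow_solution src tgt Pa r psi_r q a alpha \<phi>2 \<psi>2"
  shows "transpose (incidence src tgt) *v (\<phi>1 - \<phi>2) = 0"
  by (simp only: matrix_vector_mult_diff_distrib gas_flow_solutionD(2)[OF assms(1)]
      gas_flow_solutionD(2)[OF assms(2)] diff_self)

lemma gas_flow_pressure_le:
  fixes src tgt :: "'e::finite \<Rightarrow> 'n::finite"
  assumes conn: "graph_connected src tgt"
    and a_pos: "\<forall>l. l \<notin> Pa \<longrightarrow> a l > 0"
    and alpha_pos: "\<forall>l\<in>Pa. alpha l > 0"
    and sol1: "gas_flow_solution src tgt Pa r psi_r q a alpha \<phi>1 \<psi>1"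
    and sol2: "gas_flow_solution src tgt Pa r psi_r q a alpha \<phi>2 \<psi>2"
  shows "\<psi>1 $ n \<le> \<psi>2 $ n"
proof (rule ccontr)
  assume "\<not> \<psi>1 $ n \<le> \<psi>2 $ n"
  define S where "S = {m. \<psi>2 $ m < \<psi>1 $ m}"
  define c where "c l = (of_bool (src l \<in> S) - of_bool (tgt l \<in> S)) * (\<phi>1 - \<phi>2) $ l" for l
  have "n \<in> S" "r \<notin> S"
    using \<open>\<not> \<psi>1 $ n \<le> \<psi>2 $ n\<close> gas_flow_solutionD(1)[OF sol1] gas_flow_solutionD(1)[OF sol2]
    by (auto simp: S_def)
  then obtain e where e: "(src e \<in> S) \<noteq> (tgt e \<in> S)"
    using graph_connected_cut_edge[OF conn] by blast
  have lossy_if_crossing: "l \<notin> Pa" if "(src l \<in> S) \<noteq> (tgt l \<in> S)" for l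
  proof
    assume "l \<in> Pa"
    then have "(tgt l \<in> S) = (src l \<in> S)"
      using alpha_pos gas_flow_solutionD(4)[OF sol1] gas_flow_solutionD(4)[OF sol2]
      by (simp add: S_def)
    with that show False by simp
  qed
  have flow_order: "\<phi>2 $ l < \<phi>1 $ l \<longleftrightarrow> \<psi>2 $ src l - \<psi>2 $ tgt l < \<psi>1 $ src l - \<psi>1 $ tgt l"
    "\<phi>1 $ l < \<phi>2 $ l \<longleftrightarrow> \<psi>1 $ src l - \<psi>1 $ tgt l < \<psi>2 $ src l - \<psi>2 $ tgt l"
    if "l \<notin> Pa" for l
    using strict_mono_less[OF strict_mono_sgn_mult_square[of "a l"]] a_pos that
      gas_flow_solutionD(3)[OF sol1 that] gas_flow_solutionD(3)[OF sol2 that] by simp_all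
  have c_crossing: "0 < c l" if "(src l \<in> S) \<noteq> (tgt l \<in> S)" for l
    using that flow_order[OF lossy_if_crossing[OF that]] by (auto simp: c_def S_def)
  have "0 \<le> c l" for l
    using c_crossing[of l] by (cases "(src l \<in> S) = (tgt l \<in> S)") (auto simp: c_def)
  then have "0 < sum c UNIV"
    using sum_pos2[of UNIV e c] c_crossing[OF e] by simp
  moreover have "sum c UNIV = (\<Sum>m\<in>S. (transpose (incidence src tgt) *v (\<phi>1 - \<phi>2)) $ m)"
    unfolding c_def by (rule sum_transpose_incidence_mult[symmetric])
  ultimately show False
    using gas_flow_solutions_diff_circulation[OF sol1 sol2] by simp
qed

theorem theorem1:
  fixes src tgt :: "'e::finite \<Rightarrow> 'n::finite"
    and Pa :: "'e set" and r :: 'n and psi_r :: real and q :: "real ^ 'n"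
    and a alpha :: "'e \<Rightarrow> real"
  assumes "graph_connected src tgt"
    and "\<forall>es vs. is_cycle src tgt es vs \<longrightarrow> (\<exists>l\<in>set es. l \<notin> Pa)"
    and "(\<Sum>n\<in>UNIV. q $ n) = 0"
    and "\<forall>l. l \<notin> Pa \<longrightarrow> a l > 0"
    and "\<forall>l\<in>Pa. alpha l > 0"
    and "gas_flow_solution src tgt Pa r psi_r q a alpha \<phi>1 \<psi>1"
    and "gas_flow_solution src tgt Pa r psi_r q a alpha \<phi>2 \<psi>2"
  shows "\<phi>1 = \<phi>2 \<and> \<psi>1 = \<psi>2"
proof -
  have psi: "\<psi>1 = \<psi>2"
    using gas_flow_pressure_le[OF assms(1,4,5,6,7)] gas_flow_pressure_le[OF assms(1,4,5,7,6)]
    by (simp add: vec_eq_iff order_antisym)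
  have lossy: "(\<phi>1 - \<phi>2) $ l = 0" if "l \<notin> Pa" for l
    using strict_mono_eq[OF strict_mono_sgn_mult_square[of "a l"]] assms(4) that psi
      gas_flow_solutionD(3)[OF assms(6) that] gas_flow_solutionD(3)[OF assms(7) that]
    by simp
  have "\<forall>es vs. is_cycle src tgt es vs \<longrightarrow> (\<exists>l\<in>set es. (\<phi>1 - \<phi>2) $ l = 0)"
    using assms(2) lossy by blast
  then have "\<phi>1 - \<phi>2 = 0"
    by (rule circulation_acyclic_support_eq_0[OF gas_flow_solutions_diff_circulation[OF assms(6,7)]])
  then show ?thesis using psi by simp
qed
end
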